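(* There is an absolute constant $C>0$ such that the following holds. Let $R>0$, let $\{\xi_k\}$ be a finite set of points of $\mathbb{R}^2$ lying on the circle $\{\xi\in\mathbb{R}^2:\ \|\xi\|=R\}$, and let $$M:=\sup_j \#\{k:\ \|\xi_k-\xi_j\|\le R^{1/2}\}.$$ Then for every choice of complex coefficients $\{a_k\}$, $$\sup_{Q}\left(\int_{Q}\Big|\sum_k a_k e^{2\pi i\,\xi_k\cdot x}\Big|^4\,dx\right)^{1/4}\le C\,M^{1/2}\Big(\sum_k |a_k|^2\Big)^{1/2},$$ where the supremum is taken over all squares $Q\subset\mathbb{R}^2$ of Lebesgue measure $1$ and $dx$ is Lebesgue measure. In particular $C$ does not depend on $R$, on the points $\xi_k$, or on the coefficients. *)

theory Defs
  imports "HOL-Analysis.Analysis"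
begin

definition unit_square :: "(real^2) set \<Rightarrow> bool" where
  "unit_square Q \<longleftrightarrow> (\<exists>c u v :: real^2. norm u = 1 \<and> norm v = 1 \<and> u \<bullet> v = 0 \<and>
      Q = {c + s *\<^sub>R u + t *\<^sub>R v | s t. s \<in> {0..1} \<and> t \<in> {0..1}})"

definition cap_mult :: "real \<Rightarrow> (real^2) set \<Rightarrow> nat" where
  "cap_mult R S = Max ((\<lambda>\<eta>. card {\<xi>\<in>S. dist \<xi> \<eta> \<le> sqrt R}) ` S)"

definition exp_sum :: "(real^2) set \<Rightarrow> (real^2 \<Rightarrow> complex) \<Rightarrow> real^2 \<Rightarrow> complex" where
  "exp_sum S a x = (\<Sum>\<xi>\<in>S. a \<xi> * cis (2 * pi * (\<xi> \<bullet> x)))"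

end

theory Submission
  imports Defs
begin

(*
  A tensor product W of tent functions of half-width 4, centred at a corner of the square Q,
  is at least 4 on Q, and its Fourier transform is bounded by the kernel
  K(zeta) = prod_b 64 / (1 + zeta_b^2). Since |F|^4 = |F^2|^2 and F^2 is an exponential sum over
  the pair sums xi_j + xi_k, the integral of W |F|^4 is at most a double sum over pairs of pairs
  weighted by K at the difference of their pair sums. Grouping the pair sums into unit lattice
  cells, K is summable over the cells, so only pairs of pairs whose sums are within distance 2
  matter. Pair sums near the origin contribute O(M sum |a_k|^2)^2. If xi_j + xi_k is farther
  than sqrt R from the origin and xi_l + xi_m is within 2 of it, then, writing both pairs as
  midpoint plus half-difference, xi_l lies within sqrt (10 R) + 1 of xi_j or of xi_k; a disc of
  radius O(sqrt R) contains O(M) points of the circle (cover it by cells of diameter sqrt R),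
  so each pair is close to O(M^2) others.
*)

section \<open>Tent weights and their Fourier transforms\<close>

lemma integral_lborel_prod_Basis:
  fixes f :: "'a::euclidean_space \<Rightarrow> real \<Rightarrow> complex"
  assumes int: "\<And>b. b \<in> Basis \<Longrightarrow> integrable lborel (f b)"
  shows "(\<integral>x. (\<Prod>b\<in>Basis. f b (x \<bullet> b)) \<partial>(lborel::'a measure)) = (\<Prod>b\<in>Basis. (\<integral>t. f b t \<partial>lborel))"
proof -
  interpret P: product_sigma_finite "\<lambda>b::'a. (lborel::real measure)"
    by standard
  have meas: "\<And>b. b \<in> Basis \<Longrightarrow> f b \<in> borel_measurable borel"
    using borel_measurable_integrable[OF int] by simp
  have "(\<integral>x. (\<Prod>b\<in>Basis. f b (x \<bullet> b)) \<partial>(lborel::'a measure))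
      = (\<integral>g. (\<Prod>b\<in>Basis. f b ((\<Sum>b'\<in>Basis. g b' *\<^sub>R b') \<bullet> b)) \<partial>(\<Pi>\<^sub>M b\<in>Basis. lborel))"
    by (subst lborel_eq, rule integral_distr)
       (measurable, rule measurable_compose[OF _ meas], auto)
  also have "\<dots> = (\<integral>g. (\<Prod>b\<in>Basis. f b (g b)) \<partial>(\<Pi>\<^sub>M b\<in>Basis. lborel))"
    by (intro Bochner_Integration.integral_cong refl prod.cong)
       (simp add: inner_sum_left inner_Basis if_distrib cong: if_cong)
  also have "\<dots> = (\<Prod>b\<in>Basis. (\<integral>t. f b t \<partial>lborel))"
    by (rule P.product_integral_prod) (auto intro: int)
  finally show ?thesis .
qed

lemma integrable_lborel_vanishing_outside_compact:
  fixes f :: "'a::euclidean_space \<Rightarrow> 'b::{banach, second_countable_topology}"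
  assumes "compact K" "continuous_on UNIV f" "\<And>x. x \<notin> K \<Longrightarrow> f x = 0"
  shows "integrable lborel f"
proof -
  have "f = (\<lambda>x. indicator K x *\<^sub>R f x)"
    using assms(3) by (auto simp: fun_eq_iff indicator_def)
  moreover have "integrable lborel (\<lambda>x. indicator K x *\<^sub>R f x)"
    by (rule borel_integrable_compact[OF assms(1)]) (rule continuous_on_subset[OF assms(2)], auto)
  ultimately show ?thesis by simp
qed

lemma cis_sum: "finite A \<Longrightarrow> cis (\<Sum>i\<in>A. f i) = (\<Prod>i\<in>A. cis (f i))"
  by (induction A rule: finite_induct) (auto simp: cis_mult[symmetric])

lemma linear_times_exp_antiderivative:
  fixes b s z :: complex
  assumes "b \<noteq> 0"
  shows "((\<lambda>z. - \<i> / b * ((4 + s*z) * exp (\<i>*b*z)) + s / b^2 * exp (\<i>*b*z))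
     has_field_derivative ((4 + s*z) * exp (\<i>*b*z))) (at z)"
  using assms by (auto intro!: derivative_eq_intros simp: field_simps power2_eq_square)

lemma integral_linear_times_exp:
  fixes b s lo hi :: real
  assumes "b \<noteq> 0" "lo \<le> hi"
  defines "H \<equiv> \<lambda>x::real. - \<i> / of_real b * ((4 + of_real s * of_real x) * exp (\<i> * of_real b * of_real x))
                     + of_real s / (of_real b)^2 * exp (\<i> * of_real b * of_real x)"
  shows "(\<integral>t. indicator {lo..hi} t *\<^sub>R (of_real (4 + s*t) * exp (\<i> * of_real (b*t))) \<partial>lborel) = H hi - H lo"
proof (rule integral_FTC_atLeastAtMost[OF assms(2)])
  fix x
  have "(H has_vector_derivative ((4 + of_real s * of_real x) * exp (\<i> * of_real b * of_real x))) (at x within {lo..hi})"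
    unfolding H_def using assms(1)
    by (intro has_vector_derivative_real_field linear_times_exp_antiderivative) simp
  then show "(H has_vector_derivative (of_real (4 + s*x) * exp (\<i> * of_real (b*x)))) (at x within {lo..hi})"
    by (simp add: mult.assoc)
next
  show "continuous_on {lo..hi} (\<lambda>t. of_real (4 + s*t) * exp (\<i> * complex_of_real (b*t)))"
    by (intro continuous_intros)
qed

definition tent :: "real \<Rightarrow> real" where
  "tent t = max 0 (4 - \<bar>t\<bar>)"

lemma tent_nonneg: "0 \<le> tent t"
  by (simp add: tent_def)

lemma continuous_on_tent [continuous_intros]:
  "continuous_on A f \<Longrightarrow> continuous_on A (\<lambda>x. tent (f x))"
  unfolding tent_def by (intro continuous_intros)

lemma tent_fourier:
  fixes b :: real
  assumes "b \<noteq> 0"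
  shows "(\<integral>t. of_real (tent t) * exp (\<i> * of_real (b*t)) \<partial>lborel)
    = (2 - exp (4*\<i>*b) - exp (-4*\<i>*b)) / (of_real b)^2"
proof -
  define g1 where "g1 = (\<lambda>t. of_real (4 + 1*t) * exp (\<i> * of_real (b*t)))"
  define g2 where "g2 = (\<lambda>t. of_real (4 + (-1)*t) * exp (\<i> * of_real (b*t)))"
  have ae: "AE t in lborel. of_real (tent t) * exp (\<i> * of_real (b*t)) =
      indicator {-4..0} t *\<^sub>R g1 t + indicator {0..4} t *\<^sub>R g2 t"
    using AE_lborel_singleton[of 0]
    by eventually_elim (auto simp: tent_def g1_def g2_def indicator_def)
  have i1: "integrable lborel (\<lambda>t. indicator {-4..0} t *\<^sub>R g1 t)"
    unfolding g1_def by (rule borel_integrable_compact) (auto intro!: continuous_intros)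
  have i2: "integrable lborel (\<lambda>t. indicator {0..4} t *\<^sub>R g2 t)"
    unfolding g2_def by (rule borel_integrable_compact) (auto intro!: continuous_intros)
  have "(\<integral>t. of_real (tent t) * exp (\<i> * of_real (b*t)) \<partial>lborel) =
      (\<integral>t. indicator {-4..0} t *\<^sub>R g1 t + indicator {0..4} t *\<^sub>R g2 t \<partial>lborel)"
  proof (rule integral_cong_AE)
    show "(\<lambda>t. of_real (tent t) * exp (\<i> * of_real (b*t))) \<in> borel_measurable lborel"
      by (simp, intro borel_measurable_continuous_onI continuous_intros)
    show "(\<lambda>t. indicator {-4..0} t *\<^sub>R g1 t + indicator {0..4} t *\<^sub>R g2 t) \<in> borel_measurable lborel"
      using i1 i2 by (intro borel_measurable_add borel_measurable_integrable)
  qed (use ae in auto)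
  also have "\<dots> = (\<integral>t. indicator {-4..0} t *\<^sub>R g1 t \<partial>lborel) + (\<integral>t. indicator {0..4} t *\<^sub>R g2 t \<partial>lborel)"
    by (rule Bochner_Integration.integral_add[OF i1 i2])
  also have "\<dots> = (2 - exp (4*\<i>*b) - exp (-4*\<i>*b)) / (of_real b)^2"
    unfolding g1_def g2_def
    by (subst integral_linear_times_exp[OF assms], simp)+
       (use assms in \<open>simp add: field_simps power2_eq_square\<close>)
  finally show ?thesis .
qed

lemma norm_tent_fourier_le_32:
  "norm (\<integral>t. of_real (tent t) * exp (\<i> * of_real (b*t)) \<partial>lborel) \<le> 32"
proof -
  have "norm (\<integral>t. of_real (tent t) * exp (\<i> * of_real (b*t)) \<partial>lborel)
     \<le> (\<integral>t. norm (of_real (tent t) * exp (\<i> * of_real (b*t))) \<partial>lborel)"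
    by (rule integral_norm_bound)
  also have "\<dots> = (\<integral>t. tent t \<partial>lborel)"
    by (rule Bochner_Integration.integral_cong) (auto simp: norm_mult tent_nonneg)
  also have "\<dots> \<le> (\<integral>t. 4 * indicator {-4..4::real} t \<partial>lborel)"
  proof (rule integral_mono)
    show "integrable lborel tent"
      by (rule integrable_lborel_vanishing_outside_compact[of "{-4..4}"])
         (auto simp: tent_def intro!: continuous_intros)
    show "integrable lborel (\<lambda>t. (4::real) * indicator {-4..4::real} t)"
      by (intro integrable_mult_right integrable_real_indicator) auto
  qed (auto simp: tent_def indicator_def)
  also have "\<dots> = 32" by simp
  finally show ?thesis .
qed

lemma norm_tent_fourier_le:
  fixes y :: real
  shows "norm (\<integral>t. of_real (tent t) * cis (2*pi*y*t) \<partial>lborel) \<le> 64 / (1 + y^2)"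
proof -
  define b where "b = 2*pi*y"
  have eq: "(\<lambda>t. of_real (tent t) * cis (2*pi*y*t)) = (\<lambda>t. of_real (tent t) * exp (\<i> * of_real (b*t)))"
    by (simp add: b_def cis_conv_exp mult.assoc)
  show ?thesis
  proof (cases "y^2 \<le> 1")
    case True
    have "32 \<le> 64 / (1 + y^2)" using True by (simp add: le_divide_eq add_pos_nonneg)
    with norm_tent_fourier_le_32[of b] show ?thesis unfolding eq by linarith
  next
    case False
    then have b0: "b \<noteq> 0" by (auto simp: b_def)
    have "norm (2 - exp (4*\<i>*b) - exp (-4*\<i>*b)) \<le> norm (2::complex) + norm (exp (4*\<i>*b)) + norm (exp (-4*\<i>*b))"
      using norm_triangle_ineq4[of "2 - exp (4*\<i>*b)" "exp (-4*\<i>*b)"]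
        norm_triangle_ineq4[of "2::complex" "exp (4*\<i>*b)"] by linarith
    also have "\<dots> = 4" by (simp add: norm_exp_i_times)
    finally have "norm (\<integral>t. of_real (tent t) * cis (2*pi*y*t) \<partial>lborel) \<le> 4 / b^2"
      unfolding eq tent_fourier[OF b0] by (simp add: norm_divide norm_power divide_right_mono)
    also have "\<dots> \<le> 64 / (1 + y^2)"
    proof -
      have y2: "1 < y^2" using False by simp
      have "pi^2 \<ge> 1" using pi_gt3 by (simp add: less_imp_le one_le_power)
      then have "b^2 \<ge> 4 * y^2" unfolding b_def by (simp add: power_mult_distrib mult_right_mono)
      then have "4 / b^2 \<le> 4 / (4 * y^2)" using y2 by (intro divide_left_mono) (auto intro!: mult_pos_pos)
      also have "\<dots> = 1 / y^2" by simp
      also have "\<dots> \<le> 64 / (1 + y^2)" using y2 by (simp add: divide_simps)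
      finally show ?thesis .
    qed
    finally show ?thesis .
  qed
qed

lemma norm_shifted_tent_fourier_le:
  fixes y c :: real
  shows "norm (\<integral>t. of_real (tent (t - c)) * cis (2*pi*y*t) \<partial>lborel) \<le> 64 / (1 + y^2)"
proof -
  have "(\<integral>t. of_real (tent (t - c)) * cis (2*pi*y*t) \<partial>lborel)
      = \<bar>1\<bar> *\<^sub>R (\<integral>t. of_real (tent ((c + 1*t) - c)) * cis (2*pi*y*(c + 1*t)) \<partial>lborel)"
    by (rule lborel_integral_real_affine) simp
  also have "\<dots> = (\<integral>t. cis (2*pi*y*c) * (of_real (tent t) * cis (2*pi*y*t)) \<partial>lborel)"
    by (simp add: distrib_left cis_mult[symmetric] mult_ac)
  also have "\<dots> = cis (2*pi*y*c) * (\<integral>t. of_real (tent t) * cis (2*pi*y*t) \<partial>lborel)"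
    by (rule integral_mult_right_zero)
  finally show ?thesis
    using norm_tent_fourier_le[of y] by (simp add: norm_mult)
qed

definition tent_weight :: "'a::euclidean_space \<Rightarrow> 'a \<Rightarrow> real" where
  "tent_weight c x = (\<Prod>b\<in>Basis. tent (x \<bullet> b - c \<bullet> b))"

definition tent_kernel :: "'a::euclidean_space \<Rightarrow> real" where
  "tent_kernel \<zeta> = (\<Prod>b\<in>Basis. 64 / (1 + (\<zeta> \<bullet> b)^2))"

lemma tent_weight_nonneg: "0 \<le> tent_weight c x"
  unfolding tent_weight_def by (intro prod_nonneg) (simp add: tent_nonneg)

lemma continuous_on_tent_weight: "continuous_on UNIV (tent_weight c)"
  unfolding tent_weight_def by (intro continuous_intros)

lemma tent_weight_eq_0:
  assumes "x \<notin> cbox (c - (\<Sum>b\<in>Basis. 4 *\<^sub>R b)) (c + (\<Sum>b\<in>Basis. 4 *\<^sub>R b))"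
  shows "tent_weight c x = 0"
proof -
  from assms obtain b where b: "b \<in> Basis" "\<not> (c \<bullet> b - 4 \<le> x \<bullet> b \<and> x \<bullet> b \<le> c \<bullet> b + 4)"
    by (auto simp: mem_box inner_diff_left inner_add_left inner_sum_left inner_Basis if_distrib cong: if_cong)
  then have "tent (x \<bullet> b - c \<bullet> b) = 0" by (auto simp: tent_def)
  then show ?thesis unfolding tent_weight_def using b(1) by (intro prod_zero) auto
qed

lemma integrable_tent_weight_scaleR:
  fixes f :: "'a::euclidean_space \<Rightarrow> 'b::{banach, second_countable_topology}"
  assumes "continuous_on UNIV f"
  shows "integrable lborel (\<lambda>x. tent_weight c x *\<^sub>R f x)"
  by (rule integrable_lborel_vanishing_outside_compact[OF compact_cbox,
        of _ "c - (\<Sum>b\<in>Basis. 4 *\<^sub>R b)" "c + (\<Sum>b\<in>Basis. 4 *\<^sub>R b)"])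
     (auto simp: tent_weight_eq_0 intro!: continuous_intros
           continuous_on_compose2[OF continuous_on_tent_weight] continuous_on_compose2[OF assms])

lemma tent_weight_ge:
  fixes c x :: "'a::euclidean_space"
  assumes "norm (x - c) \<le> 2"
  shows "2 ^ DIM('a) \<le> tent_weight c x"
proof -
  have "(\<Prod>b\<in>(Basis::'a set). (2::real)) \<le> tent_weight c x"
    unfolding tent_weight_def
  proof (intro prod_mono conjI)
    fix b :: 'a assume "b \<in> Basis"
    then have "\<bar>(x - c) \<bullet> b\<bar> \<le> norm (x - c)" by (rule Basis_le_norm)
    then show "2 \<le> tent (x \<bullet> b - c \<bullet> b)" using assms by (auto simp: tent_def inner_diff_left)
  qed simp
  then show ?thesis by simp
qed

lemma tent_weight_fourier:
  fixes c \<zeta> :: "'a::euclidean_space"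
  shows "(\<integral>x. of_real (tent_weight c x) * cis (2*pi*(\<zeta> \<bullet> x)) \<partial>lborel)
     = (\<Prod>b\<in>Basis. (\<integral>t. of_real (tent (t - c \<bullet> b)) * cis (2*pi*(\<zeta> \<bullet> b)*t) \<partial>lborel))"
proof -
  have "cis (2*pi*(\<zeta> \<bullet> x)) = (\<Prod>b\<in>Basis. cis (2*pi*(\<zeta> \<bullet> b)*(x \<bullet> b)))" for x
  proof -
    have "cis (2*pi*(\<zeta> \<bullet> x)) = cis (\<Sum>b\<in>Basis. 2*pi*(\<zeta> \<bullet> b)*(x \<bullet> b))"
      by (subst euclidean_inner) (simp add: sum_distrib_left mult_ac)
    then show ?thesis by (simp add: cis_sum)
  qed
  then have eq: "(\<lambda>x. of_real (tent_weight c x) * cis (2*pi*(\<zeta> \<bullet> x))) =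
      (\<lambda>x. \<Prod>b\<in>Basis. of_real (tent ((x \<bullet> b) - c \<bullet> b)) * cis (2*pi*(\<zeta> \<bullet> b)*(x \<bullet> b)))"
    by (simp add: tent_weight_def prod.distrib)
  show ?thesis
    unfolding eq
  proof (rule integral_lborel_prod_Basis)
    fix b :: 'a
    show "integrable lborel (\<lambda>t. of_real (tent (t - c \<bullet> b)) * cis (2*pi*(\<zeta> \<bullet> b)*t))"
      by (rule integrable_lborel_vanishing_outside_compact[of "{c \<bullet> b - 4 .. c \<bullet> b + 4}"])
         (auto simp: tent_def intro!: continuous_intros)
  qed
qed

lemma norm_tent_weight_fourier_le:
  fixes c \<zeta> :: "'a::euclidean_space"
  shows "norm (\<integral>x. of_real (tent_weight c x) * cis (2*pi*(\<zeta> \<bullet> x)) \<partial>lborel) \<le> tent_kernel \<zeta>"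
  unfolding tent_weight_fourier tent_kernel_def prod_norm[symmetric]
  by (intro prod_mono conjI norm_ge_zero norm_shifted_tent_fourier_le)

section \<open>Expanding the fourth moment\<close>

lemma unit_square_subset_cball:
  assumes "unit_square Q"
  obtains c where "compact Q" "Q \<subseteq> cball c 2"
proof -
  obtain c u v :: "real^2" where uv: "norm u = 1" "norm v = 1"
    and Q: "Q = {c + s *\<^sub>R u + t *\<^sub>R v | s t. s \<in> {0..1} \<and> t \<in> {0..1}}"
    using assms unfolding unit_square_def by blast
  have "Q = (\<lambda>p. c + fst p *\<^sub>R u + snd p *\<^sub>R v) ` ({0..1} \<times> {0..1})"
    unfolding Q by force
  then have "compact Q"
    by (simp only:) (intro compact_continuous_image compact_Times compact_Icc continuous_intros)
  moreover have "Q \<subseteq> cball c 2"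
  proof
    fix x assume "x \<in> Q"
    then obtain s t where st: "s \<in> {0..1}" "t \<in> {0..1}" "x = c + s *\<^sub>R u + t *\<^sub>R v"
      unfolding Q by blast
    have "norm (x - c) \<le> norm (s *\<^sub>R u) + norm (t *\<^sub>R v)"
      using st(3) norm_triangle_ineq[of "s *\<^sub>R u" "t *\<^sub>R v"] by simp
    also have "\<dots> \<le> 2" using st(1,2) uv by simp
    finally show "x \<in> cball c 2" by (simp add: dist_norm norm_minus_commute)
  qed
  ultimately show ?thesis using that by blast
qed

lemma set_integral_le_tent_weight:
  fixes f :: "'a::euclidean_space \<Rightarrow> real"
  assumes Q: "compact Q" "Q \<subseteq> cball c 2" and f: "continuous_on UNIV f" "\<And>x. 0 \<le> f x"
  shows "(LINT x:Q|lborel. f x) \<le> (\<integral>x. tent_weight c x * f x \<partial>lborel) / 2 ^ DIM('a)"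
proof -
  have "(LINT x:Q|lborel. f x) = (\<integral>x. indicator Q x *\<^sub>R f x \<partial>lborel)"
    by (simp add: set_lebesgue_integral_def)
  also have "\<dots> \<le> (\<integral>x. tent_weight c x * f x / 2 ^ DIM('a) \<partial>lborel)"
  proof (rule integral_mono)
    show "integrable lborel (\<lambda>x. indicator Q x *\<^sub>R f x)"
      by (rule borel_integrable_compact[OF Q(1)]) (rule continuous_on_subset[OF f(1)], auto)
    show "integrable lborel (\<lambda>x. tent_weight c x * f x / 2 ^ DIM('a))"
      using integrable_tent_weight_scaleR[OF f(1), of c] by (intro integrable_divide_zero) simp
  next
    fix x
    show "indicator Q x *\<^sub>R f x \<le> tent_weight c x * f x / 2 ^ DIM('a)"
    proof (cases "x \<in> Q")
      case True
      then have "2 ^ DIM('a) \<le> tent_weight c x"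
        using Q(2) by (intro tent_weight_ge) (auto simp: dist_norm norm_minus_commute)
      then show ?thesis using True f(2)[of x] by (simp add: field_simps mult_left_mono)
    next
      case False
      then show ?thesis using f(2)[of x] tent_weight_nonneg[of c x] by simp
    qed
  qed
  also have "\<dots> = (\<integral>x. tent_weight c x * f x \<partial>lborel) / 2 ^ DIM('a)" by simp
  finally show ?thesis .
qed

lemma cmod_sum_cis_power2:
  fixes B :: "'i \<Rightarrow> complex" and \<eta> :: "'i \<Rightarrow> 'a::real_inner"
  shows "complex_of_real ((cmod (\<Sum>p\<in>P. B p * cis (2*pi*(\<eta> p \<bullet> x))))^2)
     = (\<Sum>p\<in>P. \<Sum>q\<in>P. (B p * cnj (B q)) * cis (2*pi*((\<eta> p - \<eta> q) \<bullet> x)))"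
proof -
  have "complex_of_real ((cmod (\<Sum>p\<in>P. B p * cis (2*pi*(\<eta> p \<bullet> x))))^2)
      = (\<Sum>p\<in>P. B p * cis (2*pi*(\<eta> p \<bullet> x))) * cnj (\<Sum>p\<in>P. B p * cis (2*pi*(\<eta> p \<bullet> x)))"
    by (rule complex_norm_square)
  also have "\<dots> = (\<Sum>p\<in>P. \<Sum>q\<in>P. (B p * cis (2*pi*(\<eta> p \<bullet> x))) * (cnj (B q) * cis (- (2*pi*(\<eta> q \<bullet> x)))))"
    by (simp add: sum_product cis_cnj)
  also have "\<dots> = (\<Sum>p\<in>P. \<Sum>q\<in>P. (B p * cnj (B q)) * cis (2*pi*((\<eta> p - \<eta> q) \<bullet> x)))"
    by (intro sum.cong refl) (simp add: mult_ac cis_mult inner_diff_left right_diff_distrib)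
  finally show ?thesis .
qed

lemma exp_sum_power2:
  "(exp_sum S a x)^2 = (\<Sum>p\<in>S\<times>S. (a (fst p) * a (snd p)) * cis (2*pi*((fst p + snd p) \<bullet> x)))"
proof -
  have "(exp_sum S a x)^2 = (\<Sum>j\<in>S. \<Sum>k\<in>S. (a j * cis (2*pi*(j \<bullet> x))) * (a k * cis (2*pi*(k \<bullet> x))))"
    unfolding exp_sum_def power2_eq_square sum_product ..
  also have "\<dots> = (\<Sum>j\<in>S. \<Sum>k\<in>S. (a j * a k) * cis (2*pi*((j + k) \<bullet> x)))"
    by (intro sum.cong refl) (simp add: cis_mult inner_add_left distrib_left mult_ac)
  finally show ?thesis
    by (simp add: sum.cartesian_product case_prod_beta)
qed

lemma cmod_exp_sum_power4:
  "complex_of_real ((cmod (exp_sum S a x))^4) =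
    (\<Sum>p\<in>S\<times>S. \<Sum>q\<in>S\<times>S. (a (fst p) * a (snd p) * cnj (a (fst q) * a (snd q)))
       * cis (2*pi*(((fst p + snd p) - (fst q + snd q)) \<bullet> x)))"
proof -
  have "(cmod (exp_sum S a x))^4 = (cmod ((exp_sum S a x)^2))^2"
    by (simp add: norm_power power_mult[symmetric])
  then show ?thesis
    using cmod_sum_cis_power2[of "\<lambda>p. a (fst p) * a (snd p)" "\<lambda>p. fst p + snd p" x "S \<times> S"]
    by (simp add: exp_sum_power2 del: of_real_power)
qed

definition pair_weight :: "('a \<Rightarrow> complex) \<Rightarrow> 'a \<times> 'a \<Rightarrow> real" where
  "pair_weight a p = cmod (a (fst p)) * cmod (a (snd p))"

lemma pair_weight_nonneg: "0 \<le> pair_weight a p"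
  by (simp add: pair_weight_def)

lemma tent_weighted_fourth_moment_le:
  fixes S :: "(real^2) set" and a :: "real^2 \<Rightarrow> complex"
  assumes "finite S"
  shows "(\<integral>x. tent_weight c x * (cmod (exp_sum S a x))^4 \<partial>lborel)
    \<le> (\<Sum>p\<in>S\<times>S. \<Sum>q\<in>S\<times>S. pair_weight a p * pair_weight a q
           * tent_kernel ((fst p + snd p) - (fst q + snd q)))"
proof -
  define B where "B = (\<lambda>p. a (fst p) * a (snd p))"
  define \<eta> where "\<eta> = (\<lambda>p::(real^2)\<times>(real^2). fst p + snd p)"
  define \<Phi> where "\<Phi> = (\<lambda>\<zeta>::real^2. \<integral>x. of_real (tent_weight c x) * cis (2*pi*(\<zeta> \<bullet> x)) \<partial>lborel)"
  have int: "integrable lborel (\<lambda>x. of_real (tent_weight c x) * cis (2*pi*(\<zeta> \<bullet> x)))" for \<zeta> :: "real^2"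
    using integrable_tent_weight_scaleR[of "\<lambda>x. cis (2*pi*(\<zeta> \<bullet> x))" c]
    by (simp add: scaleR_conv_of_real continuous_intros)
  have "complex_of_real (tent_weight c x * (cmod (exp_sum S a x))^4) =
      (\<Sum>p\<in>S\<times>S. \<Sum>q\<in>S\<times>S. (B p * cnj (B q)) * (of_real (tent_weight c x) * cis (2*pi*((\<eta> p - \<eta> q) \<bullet> x))))" for x
    by (simp only: of_real_mult cmod_exp_sum_power4 B_def \<eta>_def sum_distrib_left) (simp add: mult_ac)
  then have "complex_of_real (\<integral>x. tent_weight c x * (cmod (exp_sum S a x))^4 \<partial>lborel)
      = (\<integral>x. (\<Sum>p\<in>S\<times>S. \<Sum>q\<in>S\<times>S. (B p * cnj (B q)) * (of_real (tent_weight c x) * cis (2*pi*((\<eta> p - \<eta> q) \<bullet> x)))) \<partial>lborel)"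
    by (simp add: integral_complex_of_real[symmetric])
  also have "\<dots> = (\<Sum>p\<in>S\<times>S. \<Sum>q\<in>S\<times>S. (B p * cnj (B q)) * \<Phi> (\<eta> p - \<eta> q))"
    by (simp add: \<Phi>_def int Bochner_Integration.integral_sum integrable_sum integrable_mult_right)
  finally have "(\<integral>x. tent_weight c x * (cmod (exp_sum S a x))^4 \<partial>lborel)
      = Re (\<Sum>p\<in>S\<times>S. \<Sum>q\<in>S\<times>S. (B p * cnj (B q)) * \<Phi> (\<eta> p - \<eta> q))"
    by (metis Re_complex_of_real)
  also have "\<dots> \<le> (\<Sum>p\<in>S\<times>S. \<Sum>q\<in>S\<times>S. cmod ((B p * cnj (B q)) * \<Phi> (\<eta> p - \<eta> q)))"
    by (rule order_trans[OF complex_Re_le_cmod order_trans[OF norm_sum sum_mono]]) (rule norm_sum)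
  also have "\<dots> \<le> (\<Sum>p\<in>S\<times>S. \<Sum>q\<in>S\<times>S. pair_weight a p * pair_weight a q * tent_kernel (\<eta> p - \<eta> q))"
    unfolding norm_mult B_def complex_mod_cnj \<Phi>_def pair_weight_def
    by (intro sum_mono mult_left_mono norm_tent_weight_fourier_le) auto
  finally show ?thesis unfolding \<eta>_def .
qed

section \<open>Discretising the kernel\<close>

lemma symmetric_kernel_quadratic_form_le:
  fixes K :: "'c \<Rightarrow> 'c \<Rightarrow> real" and G :: "'c \<Rightarrow> real"
  assumes sym: "\<And>c c'. K c c' = K c' c" and K0: "\<And>c c'. 0 \<le> K c c'"
  shows "(\<Sum>c\<in>C. \<Sum>c'\<in>C. K c c' * (G c * G c')) \<le> (\<Sum>c\<in>C. (G c)^2 * (\<Sum>c'\<in>C. K c c'))"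
proof -
  have "(\<Sum>c\<in>C. \<Sum>c'\<in>C. K c c' * (G c * G c')) \<le> (\<Sum>c\<in>C. \<Sum>c'\<in>C. K c c' * (((G c)^2 + (G c')^2) / 2))"
  proof (intro sum_mono mult_left_mono K0)
    fix c c'
    have "0 \<le> (G c - G c')^2" by simp
    then show "G c * G c' \<le> ((G c)^2 + (G c')^2) / 2" by (simp add: power2_eq_square algebra_simps)
  qed
  also have "\<dots> = ((\<Sum>c\<in>C. \<Sum>c'\<in>C. K c c' * (G c)^2) + (\<Sum>c\<in>C. \<Sum>c'\<in>C. K c c' * (G c')^2)) / 2"
    by (simp add: distrib_left add_divide_distrib sum_divide_distrib[symmetric] sum.distrib)
  also have "(\<Sum>c\<in>C. \<Sum>c'\<in>C. K c c' * (G c')^2) = (\<Sum>c\<in>C. \<Sum>c'\<in>C. K c c' * (G c)^2)"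
    by (subst sum.swap) (simp add: sym)
  also have "(\<Sum>c\<in>C. \<Sum>c'\<in>C. K c c' * (G c)^2) = (\<Sum>c\<in>C. (G c)^2 * (\<Sum>c'\<in>C. K c c'))"
    by (simp add: sum_distrib_left sum_distrib_right mult_ac)
  finally show ?thesis by simp
qed

lemma sum_related_products_le:
  fixes f :: "'b \<Rightarrow> real"
  assumes "finite P" and "\<And>p q. r p q = r q p"
  shows "(\<Sum>p\<in>P. \<Sum>q\<in>P. if r p q then f p * f q else 0) \<le> (\<Sum>p\<in>P. (f p)^2 * real (card {q\<in>P. r p q}))"
proof -
  have "(\<Sum>p\<in>P. \<Sum>q\<in>P. if r p q then f p * f q else 0) = (\<Sum>p\<in>P. \<Sum>q\<in>P. of_bool (r p q) * (f p * f q))"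
    by (intro sum.cong refl) auto
  also have "\<dots> \<le> (\<Sum>p\<in>P. (f p)^2 * (\<Sum>q\<in>P. of_bool (r p q)))"
    by (rule symmetric_kernel_quadratic_form_le) (use assms(2) in auto)
  also have "\<dots> = (\<Sum>p\<in>P. (f p)^2 * real (card {q\<in>P. r p q}))"
    using assms(1) by (simp add: of_bool_def sum.inter_filter[symmetric])
  finally show ?thesis .
qed

lemma sum_sum_kernel_group:
  fixes A :: "'p \<Rightarrow> real" and K :: "'c \<Rightarrow> 'c \<Rightarrow> real" and g :: "'p \<Rightarrow> 'c"
  assumes "finite P"
  defines "G \<equiv> \<lambda>c. \<Sum>p\<in>{p\<in>P. g p = c}. A p"
  shows "(\<Sum>p\<in>P. \<Sum>q\<in>P. A p * A q * K (g p) (g q)) = (\<Sum>c\<in>g ` P. \<Sum>c'\<in>g ` P. K c c' * (G c * G c'))"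
proof -
  have group: "(\<Sum>p\<in>P. h (g p) * A p) = (\<Sum>c\<in>g ` P. h c * G c)" for h :: "'c \<Rightarrow> real"
  proof -
    have "(\<Sum>p\<in>P. h (g p) * A p) = (\<Sum>c\<in>g ` P. \<Sum>p\<in>{p\<in>P. g p = c}. h (g p) * A p)"
      by (rule sum.group[symmetric]) (use assms in auto)
    also have "\<dots> = (\<Sum>c\<in>g ` P. h c * G c)"
      by (intro sum.cong refl) (simp add: G_def sum_distrib_left)
    finally show ?thesis .
  qed
  have "(\<Sum>p\<in>P. \<Sum>q\<in>P. A p * A q * K (g p) (g q)) = (\<Sum>p\<in>P. (\<Sum>q\<in>P. K (g p) (g q) * A q) * A p)"
    by (simp add: sum_distrib_left sum_distrib_right mult_ac)
  also have "\<dots> = (\<Sum>p\<in>P. (\<Sum>c'\<in>g ` P. K (g p) c' * G c') * A p)"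
    by (simp add: group)
  also have "\<dots> = (\<Sum>c\<in>g ` P. (\<Sum>c'\<in>g ` P. K c c' * G c') * G c)"
    by (rule group)
  also have "\<dots> = (\<Sum>c\<in>g ` P. \<Sum>c'\<in>g ` P. K c c' * (G c * G c'))"
    by (simp add: sum_distrib_left sum_distrib_right mult_ac)
  finally show ?thesis .
qed

lemma sum_inverse_one_plus_square_atMost_le:
  "(\<Sum>k\<in>{..N}. 1 / (1 + (real k)^2)) \<le> 3 - 2 / (real N + 1)"
proof (induction N)
  case 0
  then show ?case by simp
next
  case (Suc N)
  define m where "m = real N + 1"
  have m1: "m \<ge> 1" by (simp add: m_def)
  have step: "1 / (1 + m^2) \<le> 2 / m - 2 / (m + 1)"
  proof -
    have "0 \<le> (m - 1)^2" by simp
    then have "m * (m + 1) \<le> 2 * (1 + m^2)" using m1 by (simp add: power2_eq_square algebra_simps)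
    then have "2 / (2 * (1 + m^2)) \<le> 2 / (m * (m + 1))"
      using m1 by (intro divide_left_mono) (auto intro!: mult_pos_pos add_pos_nonneg)
    also have "2 / (m * (m + 1)) = 2 / m - 2 / (m + 1)"
      using m1 by (simp add: field_simps)
    finally show ?thesis
      by (metis mult_divide_mult_cancel_left_if mult.right_neutral zero_neq_numeral)
  qed
  have "(\<Sum>k\<in>{..Suc N}. 1 / (1 + (real k)^2)) = (\<Sum>k\<in>{..N}. 1 / (1 + (real k)^2)) + 1 / (1 + m^2)"
    by (simp add: m_def)
  also have "\<dots> \<le> 3 - 2 / m + (2 / m - 2 / (m + 1))"
    using Suc step by (simp add: m_def)
  also have "\<dots> = 3 - 2 / (real (Suc N) + 1)"
    by (simp add: m_def)
  finally show ?case .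
qed

lemma sum_inverse_one_plus_square_nat_le:
  assumes "finite K"
  shows "(\<Sum>k\<in>K. 1 / (1 + (real k)^2)) \<le> 3"
proof -
  have "(\<Sum>k\<in>K. 1 / (1 + (real k)^2)) \<le> (\<Sum>k\<in>{..Max K}. 1 / (1 + (real k)^2))"
    by (rule sum_mono2) (use assms in auto)
  also have "\<dots> \<le> 3"
    using sum_inverse_one_plus_square_atMost_le[of "Max K"] by (smt (verit) divide_nonneg_nonneg of_nat_0_le_iff)
  finally show ?thesis .
qed

lemma sum_inverse_one_plus_square_int_le:
  assumes "finite X"
  shows "(\<Sum>n\<in>X. 1 / (1 + (real_of_int (m - n))^2)) \<le> 6"
proof -
  let ?f = "\<lambda>d::int. 1 / (1 + (real_of_int d)^2)"
  define Y where "Y = (\<lambda>n. m - n) ` X"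
  have fY: "finite Y" using assms by (simp add: Y_def)
  have "(\<Sum>n\<in>X. ?f (m - n)) = (\<Sum>d\<in>Y. ?f d)"
    unfolding Y_def by (subst sum.reindex) (auto simp: inj_on_def)
  also have "\<dots> = (\<Sum>d\<in>{d\<in>Y. d \<ge> 0}. ?f d) + (\<Sum>d\<in>{d\<in>Y. \<not> d \<ge> 0}. ?f d)"
    by (subst sum.union_disjoint[symmetric]) (use fY in \<open>auto intro: sum.cong\<close>)
  also have "(\<Sum>d\<in>{d\<in>Y. d \<ge> 0}. ?f d) = (\<Sum>k\<in>nat ` {d\<in>Y. d \<ge> 0}. 1 / (1 + (real k)^2))"
    by (subst sum.reindex) (auto simp: inj_on_def intro!: sum.cong)
  also have "\<dots> \<le> 3" using fY by (intro sum_inverse_one_plus_square_nat_le) simp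
  also have "(\<Sum>d\<in>{d\<in>Y. \<not> d \<ge> 0}. ?f d) = (\<Sum>k\<in>(\<lambda>d. nat (- d)) ` {d\<in>Y. \<not> d \<ge> 0}. 1 / (1 + (real k)^2))"
    by (subst sum.reindex) (auto simp: inj_on_def intro!: sum.cong)
  also have "\<dots> \<le> 3" using fY by (intro sum_inverse_one_plus_square_nat_le) simp
  finally show ?thesis by simp
qed

lemma floor_diff_close: "\<bar>(x - z) - real_of_int (\<lfloor>x\<rfloor> - \<lfloor>z\<rfloor>)\<bar> < 1"
  using of_int_floor_le[of x] real_of_int_floor_add_one_gt[of x]
        of_int_floor_le[of z] real_of_int_floor_add_one_gt[of z]
  by (simp add: abs_less_iff) linarith

lemma dist_le_of_same_cell:
  fixes \<xi> \<eta> :: "real^2" and s :: real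
  assumes s: "s > 0" and "\<lfloor>\<xi>$1/s\<rfloor> = \<lfloor>\<eta>$1/s\<rfloor>" and "\<lfloor>\<xi>$2/s\<rfloor> = \<lfloor>\<eta>$2/s\<rfloor>"
  shows "dist \<xi> \<eta> \<le> sqrt 2 * s"
proof -
  have d: "(\<xi>$i - \<eta>$i)^2 \<le> s^2" if "\<lfloor>\<xi>$i/s\<rfloor> = \<lfloor>\<eta>$i/s\<rfloor>" for i
  proof -
    have "\<bar>(\<xi>$i - \<eta>$i)/s\<bar> \<le> 1"
      using floor_diff_close[of "\<xi>$i/s" "\<eta>$i/s"] that by (simp add: diff_divide_distrib)
    then have "\<bar>\<xi>$i - \<eta>$i\<bar> \<le> \<bar>s\<bar>" using s by (simp add: abs_divide divide_le_eq)
    then show ?thesis by (simp add: abs_le_square_iff)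
  qed
  have "(dist \<xi> \<eta>)^2 = (\<xi>$1 - \<eta>$1)^2 + (\<xi>$2 - \<eta>$2)^2"
    unfolding dist_norm power2_norm_eq_inner by (simp add: inner_vec_def sum_2 power2_eq_square)
  also have "\<dots> \<le> (sqrt 2 * s)^2"
    using d[OF assms(2)] d[OF assms(3)] by (simp add: power_mult_distrib)
  finally show ?thesis by (rule power2_le_imp_le) (use s in simp)
qed

definition cell_decay :: "real \<Rightarrow> real" where
  "cell_decay d = 192 / (1 + d^2)"

lemma cell_decay_nonneg: "0 \<le> cell_decay d"
  by (simp add: cell_decay_def add_pos_nonneg less_imp_le)

lemma inverse_one_plus_square_le_cell_decay:
  fixes y d :: real
  assumes "\<bar>y - d\<bar> < 1"
  shows "64 / (1 + y^2) \<le> cell_decay d"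
proof -
  have "\<bar>d\<bar> \<le> \<bar>y\<bar> + 1" using assms by linarith
  then have "d^2 \<le> (\<bar>y\<bar> + 1)^2" by (metis abs_ge_zero power2_abs power_mono)
  also have "\<dots> \<le> 2 * y^2 + 2"
    using zero_le_power2[of "\<bar>y\<bar> - 1"] by (simp add: power2_eq_square algebra_simps)
  finally have "1 + d^2 \<le> 3 + 3 * y^2" using zero_le_power2[of y] by linarith
  then have le: "1 + d^2 \<le> 3 * (1 + y^2)" by (simp add: distrib_left)
  have "0 < 1 + y^2" by (simp add: add_pos_nonneg)
  then have "64 / (1 + y^2) = 192 / (3 * (1 + y^2))" by (simp add: field_simps)
  also have "\<dots> \<le> 192 / (1 + d^2)" using le by (intro divide_left_mono) (auto intro!: mult_pos_pos add_pos_nonneg)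
  finally show ?thesis by (simp add: cell_decay_def)
qed

lemma tent_kernel_real2: "tent_kernel (\<zeta>::real^2) = 64 / (1 + (\<zeta>$1)^2) * (64 / (1 + (\<zeta>$2)^2))"
proof -
  have B: "(Basis :: (real^2) set) = {axis 1 1, axis 2 1}"
    unfolding Basis_vec_def using exhaust_2 by (auto, metis)
  have "axis (1::2) (1::real) \<noteq> axis 2 1" by (simp add: axis_eq_axis)
  then show ?thesis unfolding tent_kernel_def B by (simp add: inner_axis)
qed

definition cell_kernel :: "int \<times> int \<Rightarrow> int \<times> int \<Rightarrow> real" where
  "cell_kernel c c' = cell_decay (of_int (fst c - fst c')) * cell_decay (of_int (snd c - snd c'))"

lemma cell_kernel_nonneg: "0 \<le> cell_kernel c c'"
  by (simp add: cell_kernel_def cell_decay_nonneg)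

lemma cell_kernel_commute: "cell_kernel c c' = cell_kernel c' c"
  by (simp add: cell_kernel_def cell_decay_def power2_commute)

lemma tent_kernel_le_cell_kernel:
  fixes u v :: "real^2"
  shows "tent_kernel (u - v) \<le> cell_kernel (\<lfloor>u$1\<rfloor>, \<lfloor>u$2\<rfloor>) (\<lfloor>v$1\<rfloor>, \<lfloor>v$2\<rfloor>)"
  unfolding tent_kernel_real2 cell_kernel_def prod.sel
  using floor_diff_close[of "u$1" "v$1"] floor_diff_close[of "u$2" "v$2"]
  by (intro mult_mono inverse_one_plus_square_le_cell_decay) (auto simp: add_pos_nonneg less_imp_le cell_decay_nonneg)

lemma sum_cell_kernel_le:
  assumes "finite C"
  shows "(\<Sum>c'\<in>C. cell_kernel c c') \<le> 1152^2"
proof -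
  have row: "(\<Sum>n\<in>X. cell_decay (of_int (m - n))) \<le> 1152" if "finite X" for X m
  proof -
    have "(\<Sum>n\<in>X. cell_decay (of_int (m - n))) = 192 * (\<Sum>n\<in>X. 1 / (1 + (real_of_int (m - n))^2))"
      by (simp add: cell_decay_def sum_distrib_left)
    then show ?thesis using sum_inverse_one_plus_square_int_le[OF that, of m] by linarith
  qed
  have "(\<Sum>c'\<in>C. cell_kernel c c') \<le> (\<Sum>c'\<in>fst ` C \<times> snd ` C. cell_kernel c c')"
    by (rule sum_mono2) (use assms in \<open>auto simp: cell_kernel_nonneg mem_Times_iff, (metis fst_conv snd_conv image_eqI)+\<close>)
  also have "\<dots> = (\<Sum>n\<in>fst ` C. cell_decay (of_int (fst c - n))) * (\<Sum>n\<in>snd ` C. cell_decay (of_int (snd c - n)))"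
    by (simp add: cell_kernel_def sum_product sum.cartesian_product case_prod_beta)
  also have "\<dots> \<le> 1152 * 1152"
    using assms by (intro mult_mono row sum_nonneg cell_decay_nonneg) auto
  finally show ?thesis by (simp add: power2_eq_square)
qed

lemma tent_kernel_sum_le_close_sum:
  fixes A :: "'p \<Rightarrow> real" and \<eta> :: "'p \<Rightarrow> real^2"
  assumes fin: "finite P" and A0: "\<And>p. 0 \<le> A p"
  shows "(\<Sum>p\<in>P. \<Sum>q\<in>P. A p * A q * tent_kernel (\<eta> p - \<eta> q))
      \<le> 1152^2 * (\<Sum>p\<in>P. \<Sum>q\<in>P. if norm (\<eta> p - \<eta> q) \<le> 2 then A p * A q else 0)"
proof -
  define cell where "cell = (\<lambda>p. (\<lfloor>\<eta> p $ 1\<rfloor>, \<lfloor>\<eta> p $ 2\<rfloor>))"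
  define G where "G = (\<lambda>c. \<Sum>p\<in>{p\<in>P. cell p = c}. A p)"
  have "(\<Sum>p\<in>P. \<Sum>q\<in>P. A p * A q * tent_kernel (\<eta> p - \<eta> q))
      \<le> (\<Sum>p\<in>P. \<Sum>q\<in>P. A p * A q * cell_kernel (cell p) (cell q))"
    using A0 unfolding cell_def by (intro sum_mono mult_left_mono tent_kernel_le_cell_kernel) auto
  also have "\<dots> = (\<Sum>c\<in>cell ` P. \<Sum>c'\<in>cell ` P. cell_kernel c c' * (G c * G c'))"
    unfolding G_def using fin by (rule sum_sum_kernel_group)
  also have "\<dots> \<le> (\<Sum>c\<in>cell ` P. (G c)^2 * (\<Sum>c'\<in>cell ` P. cell_kernel c c'))"
    by (rule symmetric_kernel_quadratic_form_le) (auto intro: cell_kernel_commute cell_kernel_nonneg)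
  also have "\<dots> \<le> (\<Sum>c\<in>cell ` P. (G c)^2 * 1152^2)"
    using fin by (intro sum_mono mult_left_mono sum_cell_kernel_le) auto
  also have "\<dots> = 1152^2 * (\<Sum>c\<in>cell ` P. (G c)^2)"
    by (simp add: sum_distrib_right mult.commute)
  also have "(\<Sum>c\<in>cell ` P. (G c)^2) = (\<Sum>c\<in>cell ` P. \<Sum>c'\<in>cell ` P. of_bool (c = c') * (G c * G c'))"
  proof (intro sum.cong refl)
    fix c assume "c \<in> cell ` P"
    then have "cell ` P \<inter> {c'. c = c'} = {c}" by auto
    then show "(G c)^2 = (\<Sum>c'\<in>cell ` P. of_bool (c = c') * (G c * G c'))"
      using fin by (simp add: power2_eq_square)
  qed
  also have "\<dots> = (\<Sum>p\<in>P. \<Sum>q\<in>P. A p * A q * of_bool (cell p = cell q))"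
    unfolding G_def by (rule sum_sum_kernel_group[symmetric, OF fin])
  also have "\<dots> \<le> (\<Sum>p\<in>P. \<Sum>q\<in>P. if norm (\<eta> p - \<eta> q) \<le> 2 then A p * A q else 0)"
  proof (intro sum_mono)
    fix p q
    have "cell p = cell q \<Longrightarrow> dist (\<eta> p) (\<eta> q) \<le> sqrt 2 * 1"
      by (rule dist_le_of_same_cell) (auto simp: cell_def)
    moreover have "sqrt 2 \<le> (2::real)" by (rule real_le_lsqrt) auto
    ultimately show "A p * A q * of_bool (cell p = cell q) \<le> (if norm (\<eta> p - \<eta> q) \<le> 2 then A p * A q else 0)"
      using A0[of p] A0[of q] by (auto simp: dist_norm)
  qed
  finally show ?thesis by simp
qed

section \<open>Points of the circle in a disc\<close>

lemma card_le_card_image_mult: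
  assumes "finite T" and "\<And>z. z \<in> g ` T \<Longrightarrow> card {x\<in>T. g x = z} \<le> m"
  shows "card T \<le> card (g ` T) * m"
proof -
  have "card T = (\<Sum>z\<in>g ` T. card {x\<in>T. g x = z})"
    using sum.group[OF assms(1), of "g ` T" g "\<lambda>_. 1::nat"] assms(1) by simp
  also have "\<dots> \<le> (\<Sum>z\<in>g ` T. m)"
    by (rule sum_mono) (rule assms(2))
  finally show ?thesis by simp
qed

lemma card_floor_interval_le:
  fixes t r s :: real
  assumes "0 \<le> r" "0 < s"
  shows "real (card {\<lfloor>(t - r)/s\<rfloor>..\<lfloor>(t + r)/s\<rfloor>}) \<le> 2 * r / s + 2"
proof -
  have "(t - r)/s \<le> (t + r)/s" using assms by (intro divide_right_mono) auto
  then have "0 \<le> \<lfloor>(t + r)/s\<rfloor> - \<lfloor>(t - r)/s\<rfloor> + 1" using floor_mono by fastforce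
  moreover have "real_of_int (\<lfloor>(t + r)/s\<rfloor> - \<lfloor>(t - r)/s\<rfloor> + 1) \<le> 2 * r / s + 2"
  proof -
    have "real_of_int \<lfloor>(t + r)/s\<rfloor> \<le> (t + r)/s" by (rule of_int_floor_le)
    moreover have "(t - r)/s < real_of_int \<lfloor>(t - r)/s\<rfloor> + 1" by (rule real_of_int_floor_add_one_gt)
    moreover have "(t + r)/s - (t - r)/s = 2 * r / s" by (simp add: diff_divide_distrib[symmetric])
    ultimately show ?thesis by (simp only: of_int_add of_int_diff of_int_1)
  qed
  ultimately show ?thesis by simp
qed

lemma card_le_cap_mult:
  assumes "finite S" "T \<subseteq> S" "\<eta> \<in> T" "\<And>\<xi>. \<xi> \<in> T \<Longrightarrow> dist \<xi> \<eta> \<le> sqrt R"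
  shows "card T \<le> cap_mult R S"
proof -
  have "card T \<le> card {\<xi>\<in>S. dist \<xi> \<eta> \<le> sqrt R}"
    by (rule card_mono) (use assms in auto)
  also have "\<dots> \<le> cap_mult R S"
    unfolding cap_mult_def using assms by (intro Max_ge) auto
  finally show ?thesis .
qed

lemma card_disc_le:
  fixes S :: "(real^2) set" and y :: "real^2"
  assumes fin: "finite S" and R: "R > 0" and r: "r \<ge> 0"
  shows "real (card {\<xi>\<in>S. dist \<xi> y \<le> r}) \<le> (2 * r / sqrt (R/2) + 2)^2 * real (cap_mult R S)"
proof -
  define s where "s = sqrt (R/2)"
  have s0: "s > 0" using R by (simp add: s_def)
  define T where "T = {\<xi>\<in>S. dist \<xi> y \<le> r}"
  define g where "g = (\<lambda>\<xi>::real^2. (\<lfloor>\<xi>$1/s\<rfloor>, \<lfloor>\<xi>$2/s\<rfloor>))"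
  define I where "I = (\<lambda>i. {\<lfloor>(y$i - r)/s\<rfloor>..\<lfloor>(y$i + r)/s\<rfloor>})"
  have gT: "g ` T \<subseteq> I 1 \<times> I 2"
  proof
    fix z assume "z \<in> g ` T"
    then obtain \<xi> where \<xi>: "\<xi> \<in> T" "z = g \<xi>" by auto
    have "y$i - r \<le> \<xi>$i \<and> \<xi>$i \<le> y$i + r" for i
      using component_le_norm_cart[of "\<xi> - y" i] \<xi>(1) by (auto simp: T_def dist_norm abs_le_iff)
    then have "\<lfloor>(y$i - r)/s\<rfloor> \<le> \<lfloor>\<xi>$i/s\<rfloor> \<and> \<lfloor>\<xi>$i/s\<rfloor> \<le> \<lfloor>(y$i + r)/s\<rfloor>" for i
      using s0 by (meson divide_right_mono floor_mono less_imp_le)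
    then show "z \<in> I 1 \<times> I 2" using \<xi>(2) by (auto simp: g_def I_def)
  qed
  have "card T \<le> card (g ` T) * cap_mult R S"
  proof (rule card_le_card_image_mult)
    show "finite T" using fin by (simp add: T_def)
    fix z assume "z \<in> g ` T"
    then obtain \<eta> where \<eta>: "\<eta> \<in> T" "g \<eta> = z" by auto
    show "card {\<xi>\<in>T. g \<xi> = z} \<le> cap_mult R S"
    proof (rule card_le_cap_mult[OF fin])
      fix \<xi> assume "\<xi> \<in> {\<xi>\<in>T. g \<xi> = z}"
      then have "dist \<xi> \<eta> \<le> sqrt 2 * s"
        using \<eta> s0 by (intro dist_le_of_same_cell) (auto simp: g_def)
      then show "dist \<xi> \<eta> \<le> sqrt R"
        using R by (simp add: s_def real_sqrt_mult[symmetric])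
    qed (use \<eta> in \<open>auto simp: T_def\<close>)
  qed
  also have "\<dots> \<le> card (I 1) * card (I 2) * cap_mult R S"
    by (intro mult_right_mono order_trans[OF card_mono[OF _ gT]]) (auto simp: I_def card_cartesian_product)
  finally have "real (card T) \<le> real (card (I 1)) * real (card (I 2)) * real (cap_mult R S)"
    by (simp add: of_nat_mult[symmetric] del: of_nat_mult)
  also have "\<dots> \<le> (2 * r / s + 2) * (2 * r / s + 2) * real (cap_mult R S)"
    unfolding I_def by (intro mult_right_mono mult_mono card_floor_interval_le) (use r s0 in auto)
  finally show ?thesis by (simp add: T_def s_def power2_eq_square)
qed

lemma card_disc_le_300:
  fixes S :: "(real^2) set" and y :: "real^2"
  assumes fin: "finite S" and R: "R > 0" and circ: "\<forall>\<xi>\<in>S. norm \<xi> = R" and r: "r \<ge> 0"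
    and small: "R \<ge> 1 \<Longrightarrow> r \<le> 5 * sqrt R"
  shows "real (card {\<xi>\<in>S. dist \<xi> y \<le> r}) \<le> 300 * real (cap_mult R S)"
proof (cases "R \<ge> 1")
  case True
  have sR: "0 < sqrt (R/2)" using R by simp
  have "(10 * sqrt R)^2 \<le> (15 * sqrt (R/2))^2" using R by (simp add: power_mult_distrib)
  then have "10 * sqrt R \<le> 15 * sqrt (R/2)" by (rule power2_le_imp_le) (use R in simp)
  then have "2 * r / sqrt (R/2) \<le> 15" using small[OF True] sR by (simp add: divide_le_eq)
  then have "(2 * r / sqrt (R/2) + 2)^2 \<le> 17^2" using r sR by (intro power_mono) auto
  then have "(2 * r / sqrt (R/2) + 2)^2 * real (cap_mult R S) \<le> 300 * real (cap_mult R S)"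
    by (intro mult_right_mono) auto
  with card_disc_le[OF fin R r, of y] show ?thesis by linarith
next
  case False
  \<comment> \<open>For small R the whole circle is a disc of radius R around the origin.\<close>
  have sR: "0 < sqrt (R/2)" using R by simp
  have "(2 * R)^2 \<le> (3 * sqrt (R/2))^2" using R False by (simp add: power_mult_distrib power2_eq_square)
  then have "2 * R \<le> 3 * sqrt (R/2)" by (rule power2_le_imp_le) (use R in simp)
  then have "2 * R / sqrt (R/2) \<le> 3" using sR by (simp add: divide_le_eq)
  then have "(2 * R / sqrt (R/2) + 2)^2 \<le> 5^2" using R sR by (intro power_mono) auto
  then have bound: "(2 * R / sqrt (R/2) + 2)^2 * real (cap_mult R S) \<le> 300 * real (cap_mult R S)"
    by (intro mult_right_mono) auto
  have "card {\<xi>\<in>S. dist \<xi> y \<le> r} \<le> card {\<xi>\<in>S. dist \<xi> 0 \<le> R}"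
    using fin circ by (intro card_mono) auto
  then have "real (card {\<xi>\<in>S. dist \<xi> y \<le> r}) \<le> real (card {\<xi>\<in>S. dist \<xi> 0 \<le> R})" by simp
  also have "\<dots> \<le> (2 * R / sqrt (R/2) + 2)^2 * real (cap_mult R S)"
    using R by (intro card_disc_le[OF fin R]) simp
  finally show ?thesis using bound by linarith
qed

lemma radii_le_five_sqrt:
  assumes "R \<ge> 1"
  shows "sqrt (10*R) + 1 \<le> 5 * sqrt R" and "2 \<le> 5 * sqrt R" and "sqrt R + 2 \<le> 5 * sqrt R"
proof -
  have s1: "1 \<le> sqrt R" using assms by simp
  have "sqrt 10 \<le> 4" by (rule real_le_lsqrt) auto
  then have "sqrt 10 * sqrt R \<le> 4 * sqrt R" using assms by (intro mult_right_mono) auto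
  moreover have "sqrt (10*R) = sqrt 10 * sqrt R" by (simp add: real_sqrt_mult)
  ultimately show "sqrt (10*R) + 1 \<le> 5 * sqrt R" using s1 by linarith
  show "2 \<le> 5 * sqrt R" "sqrt R + 2 \<le> 5 * sqrt R" using s1 by linarith+
qed

section \<open>Close pair sums on the circle\<close>

lemma orthogonal_gram_identity:
  fixes h h' w :: "real^2"
  assumes "h \<bullet> w = 0"
  shows "(w \<bullet> w) * ((h \<bullet> h) * (h' \<bullet> h') - (h \<bullet> h')^2) = (h \<bullet> h) * (h' \<bullet> w)^2"
proof -
  have "h$1 * w$1 + h$2 * w$2 = 0" using assms by (simp add: inner_vec_def sum_2)
  then have "(w$1*w$1 + w$2*w$2) * ((h$1*h$1 + h$2*h$2) * (h'$1*h'$1 + h'$2*h'$2) - (h$1*h'$1 + h$2*h'$2)^2)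
     = (h$1*h$1 + h$2*h$2) * (h'$1*w$1 + h'$2*w$2)^2"
    by algebra
  then show ?thesis by (simp add: inner_vec_def sum_2)
qed

lemma min_le_of_mult_le_mult_add:
  fixes x y c :: real
  assumes "0 \<le> c" "0 \<le> x" "x * y \<le> c * (x + y)"
  shows "x \<le> 2 * c \<or> y \<le> 2 * c"
proof (rule ccontr)
  assume "\<not> (x \<le> 2 * c \<or> y \<le> 2 * c)"
  then have "2 * c * x \<le> y * x" "2 * c * y < x * y"
    using assms by (auto intro: mult_right_mono mult_strict_right_mono)
  then show False using assms(3) by (simp add: algebra_simps)
qed

lemma gram_defect_le:
  fixes h h' w w' :: "real^2"
  assumes orth: "h \<bullet> w = 0" "h' \<bullet> w' = 0" and close: "norm (w - w') \<le> 2" and far: "R < w \<bullet> w"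
  shows "R * ((h \<bullet> h) * (h' \<bullet> h') - (h \<bullet> h')^2) \<le> 4 * (h \<bullet> h) * (h' \<bullet> h')"
proof -
  define G where "G = (h \<bullet> h) * (h' \<bullet> h') - (h \<bullet> h')^2"
  have G0: "0 \<le> G"
  proof -
    have "\<bar>h \<bullet> h'\<bar> \<le> norm h * norm h'" by (rule Cauchy_Schwarz_ineq2)
    then have "(h \<bullet> h')^2 \<le> (norm h * norm h')^2"
      by (metis abs_ge_zero power2_abs power_mono)
    then show ?thesis by (simp add: G_def power_mult_distrib power2_norm_eq_inner)
  qed
  \<comment> \<open>Since h' is orthogonal to w', its inner product with the nearby w is at most 2 |h'|.\<close>
  have hw: "(h' \<bullet> w)^2 \<le> 4 * (h' \<bullet> h')"
  proof -
    have "h' \<bullet> w = h' \<bullet> (w - w')" using orth(2) by (simp add: inner_diff_right)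
    then have "\<bar>h' \<bullet> w\<bar> \<le> norm h' * norm (w - w')" by (simp add: Cauchy_Schwarz_ineq2)
    also have "\<dots> \<le> norm h' * 2" using close by (simp add: mult_left_mono)
    finally have "(h' \<bullet> w)^2 \<le> (norm h' * 2)^2"
      by (metis abs_ge_zero power2_abs power_mono)
    then show ?thesis by (simp add: power_mult_distrib power2_norm_eq_inner)
  qed
  have "R * G \<le> (w \<bullet> w) * G" using far G0 by (intro mult_right_mono) auto
  also have "\<dots> = (h \<bullet> h) * (h' \<bullet> w)^2"
    unfolding G_def by (rule orthogonal_gram_identity[OF orth(1)])
  also have "\<dots> \<le> (h \<bullet> h) * (4 * (h' \<bullet> h'))" using hw by (intro mult_left_mono) auto
  finally show ?thesis by (simp add: G_def)
qed

lemma close_half_differences: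
  fixes h h' w w' :: "real^2"
  assumes R: "0 < R" and orth: "h \<bullet> w = 0" "h' \<bullet> w' = 0"
    and close: "norm (w - w') \<le> 2" and far: "R < w \<bullet> w"
    and bounded: "h \<bullet> h \<le> R^2" "h' \<bullet> h' \<le> R^2" and diff: "\<bar>h \<bullet> h - h' \<bullet> h'\<bar> \<le> 2 * R"
  shows "norm (h - h') \<le> sqrt (10 * R) \<or> norm (h + h') \<le> sqrt (10 * R)"
proof -
  define u where "u = h \<bullet> h"
  define v where "v = h' \<bullet> h'"
  define G where "G = u * v - (h \<bullet> h')^2"
  have uv0: "0 \<le> u" "0 \<le> v" by (simp_all add: u_def v_def)
  have "R * (4 * G) \<le> 4 * (u + v) * (u + v)"
    using gram_defect_le[OF orth close far] zero_le_power2[of "u - v"]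
    by (simp add: G_def u_def v_def algebra_simps power2_eq_square)
  also have "\<dots> \<le> 4 * (u + v) * (2 * R^2)"
    using bounded uv0 by (intro mult_left_mono) (auto simp: u_def v_def)
  also have "\<dots> = R * (8 * R * (u + v))" by (simp add: power2_eq_square)
  finally have "4 * G \<le> 8 * R * (u + v)"
    using R by simp
  moreover have "(u - v)^2 \<le> 2 * R * (u + v)"
  proof -
    have "(u - v)^2 = \<bar>u - v\<bar> * \<bar>u - v\<bar>" by (simp add: power2_eq_square)
    also have "\<dots> \<le> (2 * R) * (u + v)" using diff uv0 by (intro mult_mono) (auto simp: u_def v_def abs_le_iff)
    finally show ?thesis by simp
  qed
  moreover have "((h - h') \<bullet> (h - h')) * ((h + h') \<bullet> (h + h')) = (u - v)^2 + 4 * G"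
    and "(h - h') \<bullet> (h - h') + (h + h') \<bullet> (h + h') = 2 * (u + v)"
    by (simp_all add: G_def u_def v_def algebra_simps inner_commute power2_eq_square)
  ultimately have "((h - h') \<bullet> (h - h')) * ((h + h') \<bullet> (h + h'))
      \<le> (5 * R) * ((h - h') \<bullet> (h - h') + (h + h') \<bullet> (h + h'))"
    by (simp add: algebra_simps)
  then have "(h - h') \<bullet> (h - h') \<le> 10 * R \<or> (h + h') \<bullet> (h + h') \<le> 10 * R"
    using R min_le_of_mult_le_mult_add[of "5 * R" "(h - h') \<bullet> (h - h')" "(h + h') \<bullet> (h + h')"] by simp
  then show ?thesis by (auto simp: norm_eq_sqrt_inner)
qed

lemma abs_inner_self_diff_le:
  fixes x y :: "'a::real_inner"
  shows "\<bar>x \<bullet> x - y \<bullet> y\<bar> \<le> norm (x - y) * (norm x + norm y)"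
proof -
  have "x \<bullet> x - y \<bullet> y = (x - y) \<bullet> (x + y)" by (simp add: algebra_simps inner_commute)
  then have "\<bar>x \<bullet> x - y \<bullet> y\<bar> \<le> norm (x - y) * norm (x + y)" by (simp add: Cauchy_Schwarz_ineq2)
  also have "\<dots> \<le> norm (x - y) * (norm x + norm y)" by (simp add: mult_left_mono norm_triangle_ineq)
  finally show ?thesis .
qed

lemma circle_pair_sums_close:
  fixes j k l m :: "real^2"
  assumes on_circle: "norm j = R" "norm k = R" "norm l = R" "norm m = R" and R: "R > 0"
    and close: "norm ((j + k) - (l + m)) \<le> 2" and far: "sqrt R < norm (j + k)"
  shows "dist l j \<le> sqrt (10*R) + 1 \<or> dist l k \<le> sqrt (10*R) + 1"
proof -
  \<comment> \<open>Write j, k = w/2 \<plusminus> h and l, m = w'/2 \<plusminus> h' with h \<bottom> w and h' \<bottom> w'.\<close>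
  define w where "w = j + k"
  define w' where "w' = l + m"
  define h where "h = (1/2) *\<^sub>R (j - k)"
  define h' where "h' = (1/2) *\<^sub>R (l - m)"
  have sq: "j \<bullet> j = R^2" "k \<bullet> k = R^2" "l \<bullet> l = R^2" "m \<bullet> m = R^2"
    using on_circle by (simp_all add: power2_norm_eq_inner[symmetric])
  have orth: "h \<bullet> w = 0" "h' \<bullet> w' = 0"
    unfolding h_def w_def h'_def w'_def using sq by (simp_all add: algebra_simps inner_commute)
  have pyth: "h \<bullet> h + (w \<bullet> w) / 4 = R^2" "h' \<bullet> h' + (w' \<bullet> w') / 4 = R^2"
    unfolding h_def w_def h'_def w'_def using sq
    by (simp_all add: inner_add_left inner_add_right inner_diff_left inner_diff_right inner_commute field_simps)
  have ww': "norm (w - w') \<le> 2" using close by (simp add: w_def w'_def)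
  have "\<bar>w \<bullet> w - w' \<bullet> w'\<bar> \<le> 2 * (2 * R + 2 * R)"
  proof -
    have "norm w \<le> 2 * R" "norm w' \<le> 2 * R"
      using norm_triangle_ineq[of j k] norm_triangle_ineq[of l m] on_circle by (simp_all add: w_def w'_def)
    then have "norm (w - w') * (norm w + norm w') \<le> 2 * (2 * R + 2 * R)"
      using ww' by (intro mult_mono add_mono) auto
    then show ?thesis using abs_inner_self_diff_le[of w w'] by linarith
  qed
  then have "\<bar>h \<bullet> h - h' \<bullet> h'\<bar> \<le> 2 * R"
    using pyth by (simp add: abs_le_iff)
  moreover have "R < w \<bullet> w"
  proof -
    have "sqrt R ^ 2 < (norm w)^2" using far R by (intro power_strict_mono) (auto simp: w_def)
    then show ?thesis using R by (simp add: power2_norm_eq_inner)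
  qed
  moreover have "h \<bullet> h \<le> R^2" "h' \<bullet> h' \<le> R^2"
    using pyth inner_ge_zero[of w] inner_ge_zero[of w'] by linarith+
  ultimately have "norm (h - h') \<le> sqrt (10 * R) \<or> norm (h + h') \<le> sqrt (10 * R)"
    by (intro close_half_differences[OF R orth ww'])
  moreover have "dist l j \<le> 1 + norm (h - h')" "dist l k \<le> 1 + norm (h + h')"
  proof -
    have "l - j = (1/2) *\<^sub>R (w' - w) - (h - h')" "l - k = (1/2) *\<^sub>R (w' - w) + (h + h')"
      unfolding w_def w'_def h_def h'_def by (simp_all add: vec_eq_iff field_simps)
    moreover have "norm ((1/2) *\<^sub>R (w' - w)) \<le> 1" using ww' by (simp add: norm_minus_commute)
    ultimately show "dist l j \<le> 1 + norm (h - h')" "dist l k \<le> 1 + norm (h + h')"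
      using norm_triangle_ineq4[of "(1/2) *\<^sub>R (w' - w)" "h - h'"]
        norm_triangle_ineq[of "(1/2) *\<^sub>R (w' - w)" "h + h'"]
      by (simp_all add: dist_norm)
  qed
  ultimately show ?thesis by linarith
qed

section \<open>The additive energy of pair sums\<close>

lemma card_close_pair_sums_le:
  fixes S :: "(real^2) set" and j k :: "real^2"
  assumes fin: "finite S" and R: "R > 0" and circ: "\<forall>\<xi>\<in>S. norm \<xi> = R"
    and j: "j \<in> S" and k: "k \<in> S" and far: "sqrt R < norm (j + k)"
  shows "real (card {q\<in>S\<times>S. norm ((j + k) - (fst q + snd q)) \<le> 2}) \<le> 180000 * (real (cap_mult R S))^2"
proof -
  define M where "M = real (cap_mult R S)"
  define D where "D = sqrt (10*R) + 1"
  define L where "L = {l\<in>S. dist l j \<le> D} \<union> {l\<in>S. dist l k \<le> D}"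
  define B where "B = (\<lambda>l. {m\<in>S. dist m (j + k - l) \<le> 2})"
  have sub: "{q\<in>S\<times>S. norm ((j + k) - (fst q + snd q)) \<le> 2} \<subseteq> Sigma L B"
  proof safe
    fix l m assume lm: "l \<in> S" "m \<in> S" and cl: "norm ((j + k) - (fst (l, m) + snd (l, m))) \<le> 2"
    then have "dist l j \<le> D \<or> dist l k \<le> D"
      unfolding D_def using circ j k by (intro circle_pair_sums_close[OF _ _ _ _ R _ far]) auto
    then show "l \<in> L" using lm by (auto simp: L_def)
    have "dist m (j + k - l) = norm ((j + k) - (l + m))"
      by (simp add: dist_norm norm_minus_commute algebra_simps)
    then show "m \<in> B l" using lm cl by (simp add: B_def)
  qed
  have cB: "real (card (B l)) \<le> 300 * M" for l
    unfolding B_def M_def by (rule card_disc_le_300[OF fin R circ]) (auto dest: radii_le_five_sqrt)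
  have "real (card L) \<le> real (card {l\<in>S. dist l j \<le> D}) + real (card {l\<in>S. dist l k \<le> D})"
    unfolding L_def using card_Un_le of_nat_mono by fastforce
  also have "\<dots> \<le> 300 * M + 300 * M"
    unfolding M_def using R
    by (intro add_mono card_disc_le_300[OF fin R circ]) (auto simp: D_def dest: radii_le_five_sqrt)
  finally have cL: "real (card L) \<le> 600 * M" by simp
  have "card {q\<in>S\<times>S. norm ((j + k) - (fst q + snd q)) \<le> 2} \<le> card (Sigma L B)"
    by (rule card_mono[OF _ sub]) (use fin in \<open>auto simp: L_def B_def\<close>)
  also have "card (Sigma L B) = (\<Sum>l\<in>L. card (B l))"
    by (rule card_SigmaI) (use fin in \<open>auto simp: L_def B_def\<close>)
  finally have "real (card {q\<in>S\<times>S. norm ((j + k) - (fst q + snd q)) \<le> 2}) \<le> (\<Sum>l\<in>L. real (card (B l)))"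
    by (simp add: of_nat_sum[symmetric] del: of_nat_sum)
  also have "\<dots> \<le> real (card L) * (300 * M)"
    using sum_mono[of L "\<lambda>l. real (card (B l))" "\<lambda>_. 300 * M"] cB by simp
  also have "\<dots> \<le> (600 * M) * (300 * M)"
    by (intro mult_right_mono cL) (simp add: M_def)
  finally show ?thesis by (simp add: M_def power2_eq_square)
qed

lemma sum_pair_weight_power2:
  "(\<Sum>p\<in>S\<times>S. (pair_weight a p)^2) = (\<Sum>j\<in>S. (cmod (a j))^2)^2"
  by (simp add: pair_weight_def power2_eq_square sum_product mult_ac sum.cartesian_product case_prod_beta)

lemma near_origin_pair_energy_le:
  fixes S :: "(real^2) set" and a :: "real^2 \<Rightarrow> complex"
  assumes fin: "finite S" and R: "R > 0" and circ: "\<forall>\<xi>\<in>S. norm \<xi> = R"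
  defines "near \<equiv> \<lambda>p. norm (fst p + snd p) \<le> sqrt R + 2"
  shows "(\<Sum>p\<in>S\<times>S. \<Sum>q\<in>S\<times>S. if near p \<and> near q then pair_weight a p * pair_weight a q else 0)
     \<le> (300 * real (cap_mult R S) * (\<Sum>j\<in>S. (cmod (a j))^2))^2"
proof -
  define M where "M = real (cap_mult R S)"
  have "(\<Sum>p\<in>S\<times>S. if near p then pair_weight a p else 0)
      = (\<Sum>j\<in>S. \<Sum>k\<in>S. if norm (j + k) \<le> sqrt R + 2 then cmod (a j) * cmod (a k) else 0)"
    unfolding near_def pair_weight_def by (simp add: sum.cartesian_product case_prod_beta)
  also have "\<dots> \<le> (\<Sum>j\<in>S. (cmod (a j))^2 * real (card {k\<in>S. norm (j + k) \<le> sqrt R + 2}))"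
    by (rule sum_related_products_le[OF fin]) (simp add: add.commute)
  also have "\<dots> \<le> (\<Sum>j\<in>S. (cmod (a j))^2 * (300 * M))"
  proof (intro sum_mono mult_left_mono)
    fix j
    have "{k\<in>S. norm (j + k) \<le> sqrt R + 2} = {k\<in>S. dist k (-j) \<le> sqrt R + 2}"
      by (simp add: dist_norm add.commute)
    also have "real (card \<dots>) \<le> 300 * M"
      unfolding M_def using R by (intro card_disc_le_300[OF fin R circ]) (auto dest: radii_le_five_sqrt)
    finally show "real (card {k\<in>S. norm (j + k) \<le> sqrt R + 2}) \<le> 300 * M" .
  qed simp
  also have "\<dots> = (\<Sum>j\<in>S. (cmod (a j))^2) * (300 * M)"
    by (rule sum_distrib_right[symmetric])
  finally have near_sum: "(\<Sum>p\<in>S\<times>S. if near p then pair_weight a p else 0) \<le> 300 * M * (\<Sum>j\<in>S. (cmod (a j))^2)"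
    by (simp add: mult_ac)
  have "(\<Sum>p\<in>S\<times>S. \<Sum>q\<in>S\<times>S. if near p \<and> near q then pair_weight a p * pair_weight a q else 0)
      = (\<Sum>p\<in>S\<times>S. if near p then pair_weight a p else 0)^2"
    by (simp add: power2_eq_square sum_product if_distrib cong: if_cong) (intro sum.cong refl, auto)
  also have "\<dots> \<le> (300 * M * (\<Sum>j\<in>S. (cmod (a j))^2))^2"
    by (intro power_mono near_sum) (simp add: sum_nonneg pair_weight_nonneg)
  finally show ?thesis unfolding M_def .
qed

lemma far_pair_energy_le:
  fixes S :: "(real^2) set" and a :: "real^2 \<Rightarrow> complex"
  assumes fin: "finite S" and R: "R > 0" and circ: "\<forall>\<xi>\<in>S. norm \<xi> = R"
  defines "far \<equiv> \<lambda>p q. norm ((fst p + snd p) - (fst q + snd q)) \<le> 2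
                       \<and> sqrt R < norm (fst p + snd p) \<and> sqrt R < norm (fst q + snd q)"
  shows "(\<Sum>p\<in>S\<times>S. \<Sum>q\<in>S\<times>S. if far p q then pair_weight a p * pair_weight a q else 0)
     \<le> 180000 * (real (cap_mult R S))^2 * (\<Sum>j\<in>S. (cmod (a j))^2)^2"
proof -
  define M where "M = real (cap_mult R S)"
  have degree: "real (card {q\<in>S\<times>S. far p q}) \<le> 180000 * M^2" if "p \<in> S\<times>S" for p
  proof (cases "sqrt R < norm (fst p + snd p)")
    case True
    have "card {q\<in>S\<times>S. far p q} \<le> card {q\<in>S\<times>S. norm ((fst p + snd p) - (fst q + snd q)) \<le> 2}"
      by (rule card_mono) (use fin in \<open>auto simp: far_def\<close>)
    also have "real \<dots> \<le> 180000 * M^2"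
      unfolding M_def using that True by (intro card_close_pair_sums_le[OF fin R circ]) auto
    finally show ?thesis by simp
  next
    case False
    then show ?thesis by (simp add: far_def)
  qed
  have "(\<Sum>p\<in>S\<times>S. \<Sum>q\<in>S\<times>S. if far p q then pair_weight a p * pair_weight a q else 0)
      \<le> (\<Sum>p\<in>S\<times>S. (pair_weight a p)^2 * real (card {q\<in>S\<times>S. far p q}))"
    using fin by (intro sum_related_products_le) (auto simp: far_def norm_minus_commute)
  also have "\<dots> \<le> (\<Sum>p\<in>S\<times>S. (pair_weight a p)^2 * (180000 * M^2))"
    by (intro sum_mono mult_left_mono degree) auto
  also have "\<dots> = (\<Sum>p\<in>S\<times>S. (pair_weight a p)^2) * (180000 * M^2)"
    by (rule sum_distrib_right[symmetric])
  also have "\<dots> = 180000 * M^2 * (\<Sum>j\<in>S. (cmod (a j))^2)^2"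
    by (simp add: sum_pair_weight_power2)
  finally show ?thesis unfolding M_def .
qed

lemma close_pair_sum_energy_le:
  fixes S :: "(real^2) set" and a :: "real^2 \<Rightarrow> complex"
  assumes fin: "finite S" and R: "R > 0" and circ: "\<forall>\<xi>\<in>S. norm \<xi> = R"
  shows "(\<Sum>p\<in>S\<times>S. \<Sum>q\<in>S\<times>S. if norm ((fst p + snd p) - (fst q + snd q)) \<le> 2
            then pair_weight a p * pair_weight a q else 0)
     \<le> 270000 * (real (cap_mult R S))^2 * (\<Sum>j\<in>S. (cmod (a j))^2)^2"
proof -
  define \<eta> where "\<eta> = (\<lambda>p::(real^2)\<times>(real^2). fst p + snd p)"
  define near where "near = (\<lambda>p. norm (\<eta> p) \<le> sqrt R + 2)"
  define far where "far = (\<lambda>p q. norm (\<eta> p - \<eta> q) \<le> 2 \<and> sqrt R < norm (\<eta> p) \<and> sqrt R < norm (\<eta> q))"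
  let ?w = "pair_weight a"
  \<comment> \<open>Two close pair sums are either both near the origin or both far from it.\<close>
  have split: "(if norm (\<eta> p - \<eta> q) \<le> 2 then ?w p * ?w q else 0)
      \<le> (if near p \<and> near q then ?w p * ?w q else 0) + (if far p q then ?w p * ?w q else 0)" for p q
    using norm_triangle_sub[of "\<eta> p" "\<eta> q"] norm_triangle_sub[of "\<eta> q" "\<eta> p"]
      pair_weight_nonneg[of a p] pair_weight_nonneg[of a q]
    by (auto simp: near_def far_def norm_minus_commute)
  have "(\<Sum>p\<in>S\<times>S. \<Sum>q\<in>S\<times>S. if norm (\<eta> p - \<eta> q) \<le> 2 then ?w p * ?w q else 0)
      \<le> (\<Sum>p\<in>S\<times>S. \<Sum>q\<in>S\<times>S. if near p \<and> near q then ?w p * ?w q else 0)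
        + (\<Sum>p\<in>S\<times>S. \<Sum>q\<in>S\<times>S. if far p q then ?w p * ?w q else 0)"
    unfolding sum.distrib[symmetric] by (intro sum_mono split)
  also have "\<dots> \<le> (300 * real (cap_mult R S) * (\<Sum>j\<in>S. (cmod (a j))^2))^2
      + 180000 * (real (cap_mult R S))^2 * (\<Sum>j\<in>S. (cmod (a j))^2)^2"
    unfolding near_def far_def \<eta>_def
    by (intro add_mono near_origin_pair_energy_le far_pair_energy_le fin R circ)
  finally show ?thesis by (simp add: \<eta>_def power_mult_distrib)
qed

section \<open>The fourth moment on a unit square\<close>

lemma fourth_moment_on_unit_square_le:
  fixes S :: "(real^2) set" and a :: "real^2 \<Rightarrow> complex"
  assumes R: "R > 0" and fin: "finite S" and circ: "\<forall>\<xi>\<in>S. norm \<xi> = R" and Q: "unit_square Q"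
  shows "(LINT x:Q|lborel. (cmod (exp_sum S a x))^4)
    \<le> 1152^2 * 270000 / 4 * (real (cap_mult R S))^2 * (\<Sum>\<xi>\<in>S. (cmod (a \<xi>))^2)^2"
proof -
  obtain c where "compact Q" "Q \<subseteq> cball c 2"
    using unit_square_subset_cball[OF Q] .
  moreover have "continuous_on UNIV (\<lambda>x. (cmod (exp_sum S a x))^4)"
    unfolding exp_sum_def by (intro continuous_intros)
  ultimately have "(LINT x:Q|lborel. (cmod (exp_sum S a x))^4)
      \<le> (\<integral>x. tent_weight c x * (cmod (exp_sum S a x))^4 \<partial>lborel) / 4"
    using set_integral_le_tent_weight[of Q c] by simp
  also have "\<dots> \<le> (\<Sum>p\<in>S\<times>S. \<Sum>q\<in>S\<times>S. pair_weight a p * pair_weight a q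
           * tent_kernel ((fst p + snd p) - (fst q + snd q))) / 4"
    using tent_weighted_fourth_moment_le[OF fin] by (simp add: divide_right_mono)
  also have "\<dots> \<le> 1152^2 * (\<Sum>p\<in>S\<times>S. \<Sum>q\<in>S\<times>S. if norm ((fst p + snd p) - (fst q + snd q)) \<le> 2
            then pair_weight a p * pair_weight a q else 0) / 4"
    using fin by (intro divide_right_mono tent_kernel_sum_le_close_sum) (auto simp: pair_weight_nonneg)
  also have "\<dots> \<le> 1152^2 * (270000 * (real (cap_mult R S))^2 * (\<Sum>\<xi>\<in>S. (cmod (a \<xi>))^2)^2) / 4"
    by (intro divide_right_mono mult_left_mono close_pair_sum_energy_le fin R circ) auto
  finally show ?thesis by simp
qed

lemma power2_powr_quarter:
  fixes x :: real
  assumes "0 \<le> x"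
  shows "(x^2) powr (1/4) = sqrt x"
proof -
  have "(x^2) powr (1/4) = (x powr 2) powr (1/4)" using powr_realpow'[of x 2] assms by simp
  also have "\<dots> = x powr (1/2)" by (simp add: powr_powr)
  also have "\<dots> = sqrt x" by (rule powr_half_sqrt) (rule assms)
  finally show ?thesis .
qed

theorem theorem1:
  shows "\<exists>C>0. \<forall>R>0. \<forall>S :: (real^2) set. \<forall>a :: real^2 \<Rightarrow> complex. \<forall>Q.
    finite S \<longrightarrow> (\<forall>\<xi>\<in>S. norm \<xi> = R) \<longrightarrow> unit_square Q \<longrightarrow>
    (LINT x:Q|lborel. (cmod (exp_sum S a x)) ^ 4) powr (1/4)
      \<le> C * sqrt (real (cap_mult R S)) * sqrt (\<Sum>\<xi>\<in>S. (cmod (a \<xi>))\<^sup>2)"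
proof (intro exI[of _ "(1152^2 * 270000 / 4) powr (1/4)"] conjI allI impI)
  fix R :: real and S :: "(real^2) set" and a :: "real^2 \<Rightarrow> complex" and Q :: "(real^2) set"
  assume "R > 0" "finite S" "\<forall>\<xi>\<in>S. norm \<xi> = R" "unit_square Q"
  then have "(LINT x:Q|lborel. (cmod (exp_sum S a x))^4) powr (1/4)
      \<le> (1152^2 * 270000 / 4 * (real (cap_mult R S))^2 * (\<Sum>\<xi>\<in>S. (cmod (a \<xi>))^2)^2) powr (1/4)"
    by (intro powr_mono2 fourth_moment_on_unit_square_le)
       (auto simp: set_lebesgue_integral_def indicator_def intro!: Bochner_Integration.integral_nonneg)
  also have "\<dots> = (1152^2 * 270000 / 4) powr (1/4) * sqrt (real (cap_mult R S)) * sqrt (\<Sum>\<xi>\<in>S. (cmod (a \<xi>))^2)"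
    by (simp add: powr_mult power2_powr_quarter sum_nonneg)
  finally show "(LINT x:Q|lborel. (cmod (exp_sum S a x))^4) powr (1/4)
      \<le> (1152^2 * 270000 / 4) powr (1/4) * sqrt (real (cap_mult R S)) * sqrt (\<Sum>\<xi>\<in>S. (cmod (a \<xi>))\<^sup>2)" .
qed simp

end
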